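(* Let $(\mathcal C,\otimes,I,a,l,r)$ be a monoidal category, let $(F,\Delta,\varepsilon,F_2,F_0)$ and $(G,\delta,\epsilon,G_2,G_0)$ be bicomonads on $\mathcal C$ and $\varphi:FG\to GF$ a comonad distributive law. Then $\varphi$ is a monoidal comonad distributive law if and only if the smash coproduct $FG$, i.e. the comonad with comultiplication $X\mapsto F\varphi_{GX}\circ FF\delta_X\circ\Delta_{GX}$ and counit $X\mapsto \epsilon_X\circ\varepsilon_{GX}$, equipped with the monoidal functor structure $(FG)_2(M,N)=F(G_2(M,N))\circ F_2(GM,GN)$ and $(FG)_0=F(G_0)\circ F_0$, is a bicomonad on $\mathcal C$.
   Context: A comonad $(F,\Delta,\varepsilon)$ on a category is an endofunctor with natural $\Delta:F\to FF$, $\varepsilon:F\to\mathrm{id}$ satisfying $F\Delta\circ\Delta=\Delta F\circ\Delta$, $F\varepsilon\circ\Delta=\varepsilon F\circ\Delta=\mathrm{id}_F$. For comonads $(F,\Delta,\varepsilon)$, $(G,\delta,\epsilon)$, a comonad distributive law is a natural $\varphi:FG\to GF$ with $G\varphi\circ\varphi G\circ F\delta=\delta F\circ\varphi$, $\varphi F\circ F\varphi\circ\Delta G=G\Delta\circ\varphi$, $G\varepsilon\circ\varphi=\varepsilon G$, $\epsilon F\circ\varphi=F\epsilon$; then $FG$ with the stated comultiplication and counit is a comonad. A bicomonad on a monoidal category is a comonad $(G,\delta,\epsilon)$ which is also a monoidal functor $(G,G_2,G_0)$ ($G_2(X,Y):GX\otimes GY\to G(X\otimes Y)$ natural, $G_0:I\to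 GI$, satisfying the usual coherence with $a,l,r$) such that $G(G_2(X,Y))\circ G_2(GX,GY)\circ(\delta_X\otimes\delta_Y)=\delta_{X\otimes Y}\circ G_2(X,Y)$, $\epsilon_{X\otimes Y}\circ G_2(X,Y)=\epsilon_X\otimes\epsilon_Y$, $G(G_0)\circ G_0=\delta_I\circ G_0$, $\epsilon_I\circ G_0=\mathrm{id}_I$. A comonad distributive law $\varphi$ between bicomonads $F,G$ is called monoidal if for all $M,N$: $\varphi_{M\otimes N}\circ F(G_2(M,N))\circ F_2(GM,GN)=G(F_2(M,N))\circ G_2(FM,FN)\circ(\varphi_M\otimes\varphi_N)$ and $\varphi_I\circ F(G_0)\circ F_0=G(F_0)\circ G_0$. *)

theory Defs
  imports Main
begin

text \<open>Categories are represented concretely: a set of objects (of type 'o), a set of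
arrows (of type 'a), source/target maps, composition (cmp C g f = g after f) and
identities. All conditions are
only imposed on objects/arrows of the category.\<close>

record ('o, 'a) cat =
  ob  :: "'o set"
  ar  :: "'a set"
  src :: "'a \<Rightarrow> 'o"
  trg :: "'a \<Rightarrow> 'o"
  cmp :: "'a \<Rightarrow> 'a \<Rightarrow> 'a"
  idm :: "'o \<Rightarrow> 'a"

definition hom :: "('o, 'a, 'm) cat_scheme \<Rightarrow> 'o \<Rightarrow> 'o \<Rightarrow> 'a set" where
  "hom C X Y = {f \<in> ar C. src C f = X \<and> trg C f = Y}"

definition category :: "('o, 'a, 'm) cat_scheme \<Rightarrow> bool" where
  "category C \<longleftrightarrow>
     (\<forall>f\<in>ar C. src C f \<in> ob C \<and> trg C f \<in> ob C) \<and>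
     (\<forall>X\<in>ob C. idm C X \<in> hom C X X) \<and>
     (\<forall>f\<in>ar C. \<forall>g\<in>ar C. trg C f = src C g \<longrightarrow> cmp C g f \<in> hom C (src C f) (trg C g)) \<and>
     (\<forall>f\<in>ar C. cmp C f (idm C (src C f)) = f \<and> cmp C (idm C (trg C f)) f = f) \<and>
     (\<forall>f\<in>ar C. \<forall>g\<in>ar C. \<forall>h\<in>ar C. trg C f = src C g \<longrightarrow> trg C g = src C h \<longrightarrow>
        cmp C h (cmp C g f) = cmp C (cmp C h g) f)"

definition is_iso :: "('o, 'a, 'm) cat_scheme \<Rightarrow> 'a \<Rightarrow> bool" where
  "is_iso C f \<longleftrightarrow> f \<in> ar C \<and>
     (\<exists>g\<in>hom C (trg C f) (src C f). cmp C g f = idm C (src C f) \<and> cmp C f g = idm C (trg C f))"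

record ('o, 'a) moncat = "('o, 'a) cat" +
  tno :: "'o \<Rightarrow> 'o \<Rightarrow> 'o"
  tna :: "'a \<Rightarrow> 'a \<Rightarrow> 'a"
  unt :: "'o"
  asc :: "'o \<Rightarrow> 'o \<Rightarrow> 'o \<Rightarrow> 'a"
  lu  :: "'o \<Rightarrow> 'a"
  ru  :: "'o \<Rightarrow> 'a"

definition monoidal_category :: "('o, 'a, 'm) moncat_scheme \<Rightarrow> bool" where
  "monoidal_category C \<longleftrightarrow> category C \<and>
     \<comment> \<open>tensor is a bifunctor\<close>
     (\<forall>X\<in>ob C. \<forall>Y\<in>ob C. tno C X Y \<in> ob C) \<and>
     (\<forall>f\<in>ar C. \<forall>g\<in>ar C. tna C f g \<in> hom C (tno C (src C f) (src C g)) (tno C (trg C f) (trg C g))) \<and>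
     (\<forall>X\<in>ob C. \<forall>Y\<in>ob C. tna C (idm C X) (idm C Y) = idm C (tno C X Y)) \<and>
     (\<forall>f\<in>ar C. \<forall>g\<in>ar C. \<forall>f'\<in>ar C. \<forall>g'\<in>ar C. trg C f = src C f' \<longrightarrow> trg C g = src C g' \<longrightarrow>
        tna C (cmp C f' f) (cmp C g' g) = cmp C (tna C f' g') (tna C f g)) \<and>
     unt C \<in> ob C \<and>
     \<comment> \<open>associator and unitors: natural isomorphisms\<close>
     (\<forall>X\<in>ob C. \<forall>Y\<in>ob C. \<forall>Z\<in>ob C.
        asc C X Y Z \<in> hom C (tno C (tno C X Y) Z) (tno C X (tno C Y Z)) \<and> is_iso C (asc C X Y Z)) \<and>
     (\<forall>X\<in>ob C. lu C X \<in> hom C (tno C (unt C) X) X \<and> is_iso C (lu C X)) \<and>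
     (\<forall>X\<in>ob C. ru C X \<in> hom C (tno C X (unt C)) X \<and> is_iso C (ru C X)) \<and>
     (\<forall>f\<in>ar C. \<forall>g\<in>ar C. \<forall>h\<in>ar C.
        cmp C (asc C (trg C f) (trg C g) (trg C h)) (tna C (tna C f g) h) =
        cmp C (tna C f (tna C g h)) (asc C (src C f) (src C g) (src C h))) \<and>
     (\<forall>f\<in>ar C. cmp C (lu C (trg C f)) (tna C (idm C (unt C)) f) = cmp C f (lu C (src C f))) \<and>
     (\<forall>f\<in>ar C. cmp C (ru C (trg C f)) (tna C f (idm C (unt C))) = cmp C f (ru C (src C f))) \<and>
     \<comment> \<open>pentagon\<close>
     (\<forall>W\<in>ob C. \<forall>X\<in>ob C. \<forall>Y\<in>ob C. \<forall>Z\<in>ob C.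
        cmp C (asc C W X (tno C Y Z)) (asc C (tno C W X) Y Z) =
        cmp C (tna C (idm C W) (asc C X Y Z))
          (cmp C (asc C W (tno C X Y) Z) (tna C (asc C W X Y) (idm C Z)))) \<and>
     \<comment> \<open>triangle\<close>
     (\<forall>X\<in>ob C. \<forall>Y\<in>ob C.
        cmp C (tna C (idm C X) (lu C Y)) (asc C X (unt C) Y) = tna C (ru C X) (idm C Y))"

definition endofunctor ::
  "('o, 'a, 'm) cat_scheme \<Rightarrow> ('o \<Rightarrow> 'o) \<Rightarrow> ('a \<Rightarrow> 'a) \<Rightarrow> bool" where
  "endofunctor C Fo Fa \<longleftrightarrow>
     (\<forall>X\<in>ob C. Fo X \<in> ob C) \<and>
     (\<forall>f\<in>ar C. Fa f \<in> hom C (Fo (src C f)) (Fo (trg C f))) \<and>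
     (\<forall>X\<in>ob C. Fa (idm C X) = idm C (Fo X)) \<and>
     (\<forall>f\<in>ar C. \<forall>g\<in>ar C. trg C f = src C g \<longrightarrow> Fa (cmp C g f) = cmp C (Fa g) (Fa f))"

definition nat_trans ::
  "('o, 'a, 'm) cat_scheme \<Rightarrow> ('o \<Rightarrow> 'o) \<Rightarrow> ('a \<Rightarrow> 'a) \<Rightarrow> ('o \<Rightarrow> 'o) \<Rightarrow> ('a \<Rightarrow> 'a)
     \<Rightarrow> ('o \<Rightarrow> 'a) \<Rightarrow> bool" where
  "nat_trans C Fo Fa Go Ga eta \<longleftrightarrow>
     (\<forall>X\<in>ob C. eta X \<in> hom C (Fo X) (Go X)) \<and>
     (\<forall>f\<in>ar C. cmp C (eta (trg C f)) (Fa f) = cmp C (Ga f) (eta (src C f)))"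

definition comonad ::
  "('o, 'a, 'm) cat_scheme \<Rightarrow> ('o \<Rightarrow> 'o) \<Rightarrow> ('a \<Rightarrow> 'a) \<Rightarrow> ('o \<Rightarrow> 'a) \<Rightarrow> ('o \<Rightarrow> 'a) \<Rightarrow> bool" where
  "comonad C Fo Fa D e \<longleftrightarrow>
     endofunctor C Fo Fa \<and>
     nat_trans C Fo Fa (Fo \<circ> Fo) (Fa \<circ> Fa) D \<and>
     nat_trans C Fo Fa id id e \<and>
     (\<forall>X\<in>ob C. cmp C (Fa (D X)) (D X) = cmp C (D (Fo X)) (D X)) \<and>
     (\<forall>X\<in>ob C. cmp C (Fa (e X)) (D X) = idm C (Fo X)) \<and>
     (\<forall>X\<in>ob C. cmp C (e (Fo X)) (D X) = idm C (Fo X))"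

definition monoidal_functor ::
  "('o, 'a, 'm) moncat_scheme \<Rightarrow> ('o \<Rightarrow> 'o) \<Rightarrow> ('a \<Rightarrow> 'a) \<Rightarrow> ('o \<Rightarrow> 'o \<Rightarrow> 'a) \<Rightarrow> 'a \<Rightarrow> bool" where
  "monoidal_functor C Fo Fa F2 F0 \<longleftrightarrow>
     endofunctor C Fo Fa \<and>
     (\<forall>X\<in>ob C. \<forall>Y\<in>ob C. F2 X Y \<in> hom C (tno C (Fo X) (Fo Y)) (Fo (tno C X Y))) \<and>
     (\<forall>f\<in>ar C. \<forall>g\<in>ar C.
        cmp C (F2 (trg C f) (trg C g)) (tna C (Fa f) (Fa g)) =
        cmp C (Fa (tna C f g)) (F2 (src C f) (src C g))) \<and>
     F0 \<in> hom C (unt C) (Fo (unt C)) \<and>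
     (\<forall>X\<in>ob C. \<forall>Y\<in>ob C. \<forall>Z\<in>ob C.
        cmp C (Fa (asc C X Y Z)) (cmp C (F2 (tno C X Y) Z) (tna C (F2 X Y) (idm C (Fo Z)))) =
        cmp C (F2 X (tno C Y Z)) (cmp C (tna C (idm C (Fo X)) (F2 Y Z)) (asc C (Fo X) (Fo Y) (Fo Z)))) \<and>
     (\<forall>X\<in>ob C. cmp C (Fa (lu C X)) (cmp C (F2 (unt C) X) (tna C F0 (idm C (Fo X)))) = lu C (Fo X)) \<and>
     (\<forall>X\<in>ob C. cmp C (Fa (ru C X)) (cmp C (F2 X (unt C)) (tna C (idm C (Fo X)) F0)) = ru C (Fo X))"

definition bicomonad ::
  "('o, 'a, 'm) moncat_scheme \<Rightarrow> ('o \<Rightarrow> 'o) \<Rightarrow> ('a \<Rightarrow> 'a) \<Rightarrow> ('o \<Rightarrow> 'a) \<Rightarrow> ('o \<Rightarrow> 'a)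
     \<Rightarrow> ('o \<Rightarrow> 'o \<Rightarrow> 'a) \<Rightarrow> 'a \<Rightarrow> bool" where
  "bicomonad C Go Ga d e G2 G0 \<longleftrightarrow>
     comonad C Go Ga d e \<and> monoidal_functor C Go Ga G2 G0 \<and>
     (\<forall>X\<in>ob C. \<forall>Y\<in>ob C.
        cmp C (Ga (G2 X Y)) (cmp C (G2 (Go X) (Go Y)) (tna C (d X) (d Y))) =
        cmp C (d (tno C X Y)) (G2 X Y)) \<and>
     (\<forall>X\<in>ob C. \<forall>Y\<in>ob C. cmp C (e (tno C X Y)) (G2 X Y) = tna C (e X) (e Y)) \<and>
     cmp C (Ga G0) G0 = cmp C (d (unt C)) G0 \<and>
     cmp C (e (unt C)) G0 = idm C (unt C)"

definition comonad_distributive_law ::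
  "('o, 'a, 'm) cat_scheme \<Rightarrow> ('o \<Rightarrow> 'o) \<Rightarrow> ('a \<Rightarrow> 'a) \<Rightarrow> ('o \<Rightarrow> 'a) \<Rightarrow> ('o \<Rightarrow> 'a)
     \<Rightarrow> ('o \<Rightarrow> 'o) \<Rightarrow> ('a \<Rightarrow> 'a) \<Rightarrow> ('o \<Rightarrow> 'a) \<Rightarrow> ('o \<Rightarrow> 'a) \<Rightarrow> ('o \<Rightarrow> 'a) \<Rightarrow> bool" where
  "comonad_distributive_law C Fo Fa DF eF Go Ga dG eG phi \<longleftrightarrow>
     nat_trans C (Fo \<circ> Go) (Fa \<circ> Ga) (Go \<circ> Fo) (Ga \<circ> Fa) phi \<and>
     (\<forall>X\<in>ob C. cmp C (Ga (phi X)) (cmp C (phi (Go X)) (Fa (dG X))) = cmp C (dG (Fo X)) (phi X)) \<and>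
     (\<forall>X\<in>ob C. cmp C (phi (Fo X)) (cmp C (Fa (phi X)) (DF (Go X))) = cmp C (Ga (DF X)) (phi X)) \<and>
     (\<forall>X\<in>ob C. cmp C (Ga (eF X)) (phi X) = eF (Go X)) \<and>
     (\<forall>X\<in>ob C. cmp C (eG (Fo X)) (phi X) = Fa (eG X))"

definition monoidal_distributive_law ::
  "('o, 'a, 'm) moncat_scheme \<Rightarrow> ('o \<Rightarrow> 'o) \<Rightarrow> ('a \<Rightarrow> 'a) \<Rightarrow> ('o \<Rightarrow> 'o \<Rightarrow> 'a) \<Rightarrow> 'a
     \<Rightarrow> ('o \<Rightarrow> 'o) \<Rightarrow> ('a \<Rightarrow> 'a) \<Rightarrow> ('o \<Rightarrow> 'o \<Rightarrow> 'a) \<Rightarrow> 'a \<Rightarrow> ('o \<Rightarrow> 'a) \<Rightarrow> bool" where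
  "monoidal_distributive_law C Fo Fa F2 F0 Go Ga G2 G0 phi \<longleftrightarrow>
     (\<forall>M\<in>ob C. \<forall>N\<in>ob C.
        cmp C (phi (tno C M N)) (cmp C (Fa (G2 M N)) (F2 (Go M) (Go N))) =
        cmp C (Ga (F2 M N)) (cmp C (G2 (Fo M) (Fo N)) (tna C (phi M) (phi N)))) \<and>
     cmp C (phi (unt C)) (cmp C (Fa G0) F0) = cmp C (Ga F0) G0"

end

theory Submission
  imports Defs
begin

text \<open>For any distributive law the smash coproduct FG is a comonad, its monoidal structure is
that of the composite monoidal functor, and the composite counit is monoidal. The only bicomonad
axioms that depend on \<phi> are the compatibilities of the smash comultiplication with the tensor
and unit maps of FG; naturality and the bicomonad axioms of F and G reduce them to the
monoidality of \<phi> at GM, GN and at I. Conversely \<phi> is recovered from the smash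
comultiplication by the counit of the outer F and of the inner G, so applying these counits to
the compatibilities gives back the monoidality of \<phi>.\<close>

lemma endofunctor_facts:
  assumes "endofunctor C Fo Fa"
  shows endofunctor_ob: "X \<in> ob C \<Longrightarrow> Fo X \<in> ob C"
    and endofunctor_arr: "f \<in> ar C \<Longrightarrow> Fa f \<in> ar C"
    and endofunctor_src: "f \<in> ar C \<Longrightarrow> src C (Fa f) = Fo (src C f)"
    and endofunctor_trg: "f \<in> ar C \<Longrightarrow> trg C (Fa f) = Fo (trg C f)"
    and endofunctor_idm: "X \<in> ob C \<Longrightarrow> Fa (idm C X) = idm C (Fo X)"
    and endofunctor_cmp: "f \<in> ar C \<Longrightarrow> g \<in> ar C \<Longrightarrow> trg C f = src C g \<Longrightarrow>
      Fa (cmp C g f) = cmp C (Fa g) (Fa f)"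
  using assms unfolding endofunctor_def hom_def by auto

lemma endofunctor_map_comp_eq:
  assumes "endofunctor C Fo Fa" and "cmp C a b = c"
    and "a \<in> ar C" "b \<in> ar C" "trg C b = src C a"
  shows "cmp C (Fa a) (Fa b) = Fa c"
  using assms by (metis endofunctor_cmp)

lemma nat_trans_facts:
  assumes "nat_trans C Fo Fa Go Ga eta"
  shows nat_trans_arr: "X \<in> ob C \<Longrightarrow> eta X \<in> ar C"
    and nat_trans_src: "X \<in> ob C \<Longrightarrow> src C (eta X) = Fo X"
    and nat_trans_trg: "X \<in> ob C \<Longrightarrow> trg C (eta X) = Go X"
    and nat_trans_naturality: "f \<in> ar C \<Longrightarrow> trg C f = Y \<Longrightarrow>
      cmp C (eta Y) (Fa f) = cmp C (Ga f) (eta (src C f))"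
  using assms unfolding nat_trans_def hom_def by auto

lemma comonad_facts:
  assumes "comonad C Fo Fa D e"
  shows comonad_endofunctor: "endofunctor C Fo Fa"
    and comonad_comult_nat: "nat_trans C Fo Fa (Fo \<circ> Fo) (Fa \<circ> Fa) D"
    and comonad_counit_nat: "nat_trans C Fo Fa id id e"
    and comonad_coassoc: "X \<in> ob C \<Longrightarrow> cmp C (Fa (D X)) (D X) = cmp C (D (Fo X)) (D X)"
    and comonad_counit_inner: "X \<in> ob C \<Longrightarrow> cmp C (Fa (e X)) (D X) = idm C (Fo X)"
    and comonad_counit_outer: "X \<in> ob C \<Longrightarrow> cmp C (e (Fo X)) (D X) = idm C (Fo X)"
  using assms unfolding comonad_def by auto

lemma monoidal_functor_facts:
  assumes "monoidal_functor C Fo Fa F2 F0"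
  shows monoidal_functor_endofunctor: "endofunctor C Fo Fa"
    and monoidal_functor_tensor_arr: "X \<in> ob C \<Longrightarrow> Y \<in> ob C \<Longrightarrow> F2 X Y \<in> ar C"
    and monoidal_functor_tensor_src: "X \<in> ob C \<Longrightarrow> Y \<in> ob C \<Longrightarrow>
      src C (F2 X Y) = tno C (Fo X) (Fo Y)"
    and monoidal_functor_tensor_trg: "X \<in> ob C \<Longrightarrow> Y \<in> ob C \<Longrightarrow> trg C (F2 X Y) = Fo (tno C X Y)"
    and monoidal_functor_tensor_nat: "f \<in> ar C \<Longrightarrow> g \<in> ar C \<Longrightarrow> trg C f = A \<Longrightarrow> trg C g = B \<Longrightarrow>
      cmp C (F2 A B) (tna C (Fa f) (Fa g)) = cmp C (Fa (tna C f g)) (F2 (src C f) (src C g))"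
    and monoidal_functor_unit_arr: "F0 \<in> ar C"
    and monoidal_functor_unit_src: "src C F0 = unt C"
    and monoidal_functor_unit_trg: "trg C F0 = Fo (unt C)"
    and monoidal_functor_assoc: "X \<in> ob C \<Longrightarrow> Y \<in> ob C \<Longrightarrow> Z \<in> ob C \<Longrightarrow>
      cmp C (Fa (asc C X Y Z)) (cmp C (F2 (tno C X Y) Z) (tna C (F2 X Y) (idm C (Fo Z)))) =
      cmp C (F2 X (tno C Y Z)) (cmp C (tna C (idm C (Fo X)) (F2 Y Z)) (asc C (Fo X) (Fo Y) (Fo Z)))"
    and monoidal_functor_left_unit: "X \<in> ob C \<Longrightarrow>
      cmp C (Fa (lu C X)) (cmp C (F2 (unt C) X) (tna C F0 (idm C (Fo X)))) = lu C (Fo X)"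
    and monoidal_functor_right_unit: "X \<in> ob C \<Longrightarrow>
      cmp C (Fa (ru C X)) (cmp C (F2 X (unt C)) (tna C (idm C (Fo X)) F0)) = ru C (Fo X)"
  using assms unfolding monoidal_functor_def hom_def by auto

lemma bicomonad_facts:
  assumes "bicomonad C Go Ga d e G2 G0"
  shows bicomonad_comonad: "comonad C Go Ga d e"
    and bicomonad_monoidal_functor: "monoidal_functor C Go Ga G2 G0"
    and bicomonad_comult_tensor: "X \<in> ob C \<Longrightarrow> Y \<in> ob C \<Longrightarrow>
      cmp C (Ga (G2 X Y)) (cmp C (G2 (Go X) (Go Y)) (tna C (d X) (d Y))) = cmp C (d (tno C X Y)) (G2 X Y)"
    and bicomonad_counit_tensor: "X \<in> ob C \<Longrightarrow> Y \<in> ob C \<Longrightarrow>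
      cmp C (e (tno C X Y)) (G2 X Y) = tna C (e X) (e Y)"
    and bicomonad_comult_unit: "cmp C (Ga G0) G0 = cmp C (d (unt C)) G0"
    and bicomonad_counit_unit: "cmp C (e (unt C)) G0 = idm C (unt C)"
  using assms unfolding bicomonad_def by auto

locale concrete_category =
  fixes C :: "('o, 'a, 'm) cat_scheme"
  assumes category: "category C"
begin

abbreviation comp (infixr "\<cdot>" 55) where "g \<cdot> f \<equiv> cmp C g f"

lemma src_ob [simp]: "f \<in> ar C \<Longrightarrow> src C f \<in> ob C"
  and trg_ob [simp]: "f \<in> ar C \<Longrightarrow> trg C f \<in> ob C"
  and idm_arr [simp]: "X \<in> ob C \<Longrightarrow> idm C X \<in> ar C"
  and src_idm [simp]: "X \<in> ob C \<Longrightarrow> src C (idm C X) = X"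
  and trg_idm [simp]: "X \<in> ob C \<Longrightarrow> trg C (idm C X) = X"
  and comp_arr [simp]: "f \<in> ar C \<Longrightarrow> g \<in> ar C \<Longrightarrow> trg C f = src C g \<Longrightarrow> g \<cdot> f \<in> ar C"
  and src_comp [simp]: "f \<in> ar C \<Longrightarrow> g \<in> ar C \<Longrightarrow> trg C f = src C g \<Longrightarrow> src C (g \<cdot> f) = src C f"
  and trg_comp [simp]: "f \<in> ar C \<Longrightarrow> g \<in> ar C \<Longrightarrow> trg C f = src C g \<Longrightarrow> trg C (g \<cdot> f) = trg C g"
  and comp_idm_left [simp]: "f \<in> ar C \<Longrightarrow> trg C f = X \<Longrightarrow> idm C X \<cdot> f = f"
  and comp_idm_right [simp]: "f \<in> ar C \<Longrightarrow> src C f = X \<Longrightarrow> f \<cdot> idm C X = f"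
  and comp_assoc [simp]: "f \<in> ar C \<Longrightarrow> g \<in> ar C \<Longrightarrow> h \<in> ar C \<Longrightarrow>
    trg C f = src C g \<Longrightarrow> trg C g = src C h \<Longrightarrow> (h \<cdot> g) \<cdot> f = h \<cdot> g \<cdot> f"
  using category unfolding category_def hom_def by auto

lemma comp_eq_extend2:
  assumes "a \<cdot> b = c" "a \<in> ar C" "b \<in> ar C" "trg C b = src C a" "r \<in> ar C" "trg C r = src C b"
  shows "a \<cdot> b \<cdot> r = c \<cdot> r"
proof -
  have "a \<cdot> b \<cdot> r = (a \<cdot> b) \<cdot> r" using assms(2-) by simp
  also have "\<dots> = c \<cdot> r" using assms(1) by (simp only:)
  finally show ?thesis .
qed

lemma comp_eq_extend3:
  assumes "a \<cdot> b \<cdot> c = d" "a \<in> ar C" "b \<in> ar C" "c \<in> ar C" "trg C b = src C a"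
    "trg C c = src C b" "r \<in> ar C" "trg C r = src C c"
  shows "a \<cdot> b \<cdot> c \<cdot> r = d \<cdot> r"
proof -
  have "a \<cdot> b \<cdot> c \<cdot> r = (a \<cdot> b \<cdot> c) \<cdot> r" using assms(2-) by simp
  also have "\<dots> = d \<cdot> r" using assms(1) by (simp only:)
  finally show ?thesis .
qed

end

locale concrete_monoidal_category = concrete_category C
  for C :: "('o, 'a, 'm) moncat_scheme" +
  assumes monoidal_category: "monoidal_category C"
begin

abbreviation tensor (infixr "\<otimes>" 60) where "f \<otimes> g \<equiv> tna C f g"

lemma tensor_ob [simp]: "X \<in> ob C \<Longrightarrow> Y \<in> ob C \<Longrightarrow> tno C X Y \<in> ob C"
  and unit_ob [simp]: "unt C \<in> ob C"
  and tensor_arr [simp]: "f \<in> ar C \<Longrightarrow> g \<in> ar C \<Longrightarrow> f \<otimes> g \<in> ar C"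
  and src_tensor [simp]: "f \<in> ar C \<Longrightarrow> g \<in> ar C \<Longrightarrow> src C (f \<otimes> g) = tno C (src C f) (src C g)"
  and trg_tensor [simp]: "f \<in> ar C \<Longrightarrow> g \<in> ar C \<Longrightarrow> trg C (f \<otimes> g) = tno C (trg C f) (trg C g)"
  and tensor_idm [simp]: "X \<in> ob C \<Longrightarrow> Y \<in> ob C \<Longrightarrow> idm C X \<otimes> idm C Y = idm C (tno C X Y)"
  and interchange: "f \<in> ar C \<Longrightarrow> g \<in> ar C \<Longrightarrow> f' \<in> ar C \<Longrightarrow> g' \<in> ar C \<Longrightarrow>
    trg C f = src C f' \<Longrightarrow> trg C g = src C g' \<Longrightarrow> (f' \<cdot> f) \<otimes> (g' \<cdot> g) = (f' \<otimes> g') \<cdot> (f \<otimes> g)"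
  and asc_arr [simp]: "X \<in> ob C \<Longrightarrow> Y \<in> ob C \<Longrightarrow> Z \<in> ob C \<Longrightarrow> asc C X Y Z \<in> ar C"
  and src_asc [simp]: "X \<in> ob C \<Longrightarrow> Y \<in> ob C \<Longrightarrow> Z \<in> ob C \<Longrightarrow>
    src C (asc C X Y Z) = tno C (tno C X Y) Z"
  and trg_asc [simp]: "X \<in> ob C \<Longrightarrow> Y \<in> ob C \<Longrightarrow> Z \<in> ob C \<Longrightarrow>
    trg C (asc C X Y Z) = tno C X (tno C Y Z)"
  and lu_arr [simp]: "X \<in> ob C \<Longrightarrow> lu C X \<in> ar C"
  and src_lu [simp]: "X \<in> ob C \<Longrightarrow> src C (lu C X) = tno C (unt C) X"
  and trg_lu [simp]: "X \<in> ob C \<Longrightarrow> trg C (lu C X) = X"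
  and ru_arr [simp]: "X \<in> ob C \<Longrightarrow> ru C X \<in> ar C"
  and src_ru [simp]: "X \<in> ob C \<Longrightarrow> src C (ru C X) = tno C X (unt C)"
  and trg_ru [simp]: "X \<in> ob C \<Longrightarrow> trg C (ru C X) = X"
  using monoidal_category unfolding monoidal_category_def hom_def by auto

lemma tensor_idm_comp_left [simp]:
  "p \<in> ar C \<Longrightarrow> q \<in> ar C \<Longrightarrow> trg C q = src C p \<Longrightarrow> W \<in> ob C \<Longrightarrow>
    (p \<cdot> q) \<otimes> idm C W = (p \<otimes> idm C W) \<cdot> (q \<otimes> idm C W)"
  using interchange[of q "idm C W" p "idm C W"] by simp

lemma tensor_idm_comp_right [simp]:
  "p \<in> ar C \<Longrightarrow> q \<in> ar C \<Longrightarrow> trg C q = src C p \<Longrightarrow> W \<in> ob C \<Longrightarrow>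
    idm C W \<otimes> (p \<cdot> q) = (idm C W \<otimes> p) \<cdot> (idm C W \<otimes> q)"
  using interchange[of "idm C W" q "idm C W" p] by simp

end

locale endofunctor_pair = concrete_category C
  for C :: "('o, 'a, 'm) cat_scheme" +
  fixes Fo :: "'o \<Rightarrow> 'o" and Fa :: "'a \<Rightarrow> 'a" and Go :: "'o \<Rightarrow> 'o" and Ga :: "'a \<Rightarrow> 'a"
  assumes F_endofunctor: "endofunctor C Fo Fa"
    and G_endofunctor: "endofunctor C Go Ga"
begin

lemmas [simp] =
  endofunctor_ob[OF F_endofunctor] endofunctor_arr[OF F_endofunctor]
  endofunctor_src[OF F_endofunctor] endofunctor_trg[OF F_endofunctor]
  endofunctor_idm[OF F_endofunctor] endofunctor_cmp[OF F_endofunctor]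
  endofunctor_ob[OF G_endofunctor] endofunctor_arr[OF G_endofunctor]
  endofunctor_src[OF G_endofunctor] endofunctor_trg[OF G_endofunctor]
  endofunctor_idm[OF G_endofunctor] endofunctor_cmp[OF G_endofunctor]

lemmas F_map_comp_eq = endofunctor_map_comp_eq[OF F_endofunctor]
lemmas G_map_comp_eq = endofunctor_map_comp_eq[OF G_endofunctor]

lemma F_map_comp_eq3:
  "a \<cdot> b \<cdot> c = d \<Longrightarrow> a \<in> ar C \<Longrightarrow> b \<in> ar C \<Longrightarrow> c \<in> ar C \<Longrightarrow> trg C b = src C a \<Longrightarrow>
    trg C c = src C b \<Longrightarrow> Fa a \<cdot> Fa b \<cdot> Fa c = Fa d"
  by (drule sym) simp

lemma composite_endofunctor: "endofunctor C (Fo \<circ> Go) (Fa \<circ> Ga)"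
  unfolding endofunctor_def hom_def by simp

end

section \<open>The smash coproduct of comonads\<close>

locale distributive_comonads = concrete_category C
  for C :: "('o, 'a, 'm) cat_scheme" +
  fixes Fo :: "'o \<Rightarrow> 'o" and Fa :: "'a \<Rightarrow> 'a" and DF eF :: "'o \<Rightarrow> 'a"
    and Go :: "'o \<Rightarrow> 'o" and Ga :: "'a \<Rightarrow> 'a" and dG eG :: "'o \<Rightarrow> 'a"
    and phi :: "'o \<Rightarrow> 'a"
  assumes F_comonad: "comonad C Fo Fa DF eF"
    and G_comonad: "comonad C Go Ga dG eG"
    and distributive_law: "comonad_distributive_law C Fo Fa DF eF Go Ga dG eG phi"

sublocale distributive_comonads \<subseteq> endofunctor_pair C Fo Fa Go Ga
  by unfold_locales (rule comonad_endofunctor, fact F_comonad G_comonad)+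

context distributive_comonads
begin

abbreviation smash_comult :: "'o \<Rightarrow> 'a"
  where "smash_comult X \<equiv> Fa (phi (Go X)) \<cdot> Fa (Fa (dG X)) \<cdot> DF (Go X)"

abbreviation smash_counit :: "'o \<Rightarrow> 'a"
  where "smash_counit X \<equiv> eG X \<cdot> eF (Go X)"

lemma phi_nat_trans: "nat_trans C (Fo \<circ> Go) (Fa \<circ> Ga) (Go \<circ> Fo) (Ga \<circ> Fa) phi"
  and phi_comult_G: "X \<in> ob C \<Longrightarrow> Ga (phi X) \<cdot> phi (Go X) \<cdot> Fa (dG X) = dG (Fo X) \<cdot> phi X"
  and phi_comult_F: "X \<in> ob C \<Longrightarrow> phi (Fo X) \<cdot> Fa (phi X) \<cdot> DF (Go X) = Ga (DF X) \<cdot> phi X"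
  and phi_counit_F: "X \<in> ob C \<Longrightarrow> Ga (eF X) \<cdot> phi X = eF (Go X)"
  and phi_counit_G: "X \<in> ob C \<Longrightarrow> eG (Fo X) \<cdot> phi X = Fa (eG X)"
  using distributive_law unfolding comonad_distributive_law_def by auto

lemmas [simp] =
  nat_trans_arr[OF comonad_comult_nat[OF F_comonad]]
  nat_trans_src[OF comonad_comult_nat[OF F_comonad]]
  nat_trans_trg[OF comonad_comult_nat[OF F_comonad], simplified]
  nat_trans_arr[OF comonad_counit_nat[OF F_comonad]]
  nat_trans_src[OF comonad_counit_nat[OF F_comonad]]
  nat_trans_trg[OF comonad_counit_nat[OF F_comonad], simplified]
  nat_trans_arr[OF comonad_comult_nat[OF G_comonad]]
  nat_trans_src[OF comonad_comult_nat[OF G_comonad]]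
  nat_trans_trg[OF comonad_comult_nat[OF G_comonad], simplified]
  nat_trans_arr[OF comonad_counit_nat[OF G_comonad]]
  nat_trans_src[OF comonad_counit_nat[OF G_comonad]]
  nat_trans_trg[OF comonad_counit_nat[OF G_comonad], simplified]
  nat_trans_arr[OF phi_nat_trans] nat_trans_src[OF phi_nat_trans, simplified]
  nat_trans_trg[OF phi_nat_trans, simplified]

lemmas DF_nat = nat_trans_naturality[OF comonad_comult_nat[OF F_comonad], simplified]
lemmas eF_nat = nat_trans_naturality[OF comonad_counit_nat[OF F_comonad], simplified]
lemmas dG_nat = nat_trans_naturality[OF comonad_comult_nat[OF G_comonad], simplified]
lemmas eG_nat = nat_trans_naturality[OF comonad_counit_nat[OF G_comonad], simplified]
lemmas phi_nat = nat_trans_naturality[OF phi_nat_trans, simplified]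

lemma phi_nat': "f \<in> ar C \<Longrightarrow> src C f = X \<Longrightarrow> Ga (Fa f) \<cdot> phi X = phi (trg C f) \<cdot> Fa (Ga f)"
  using phi_nat by metis

lemma DF_nat': "f \<in> ar C \<Longrightarrow> src C f = X \<Longrightarrow> Fa (Fa f) \<cdot> DF X = DF (trg C f) \<cdot> Fa f"
  using DF_nat by metis

lemma smash_comult_alt:
  "X \<in> ob C \<Longrightarrow> smash_comult X = Fa (phi (Go X)) \<cdot> DF (Go (Go X)) \<cdot> Fa (dG X)"
  by (simp add: DF_nat)

lemma smash_comult_nat:
  assumes f: "f \<in> ar C"
  shows "smash_comult (trg C f) \<cdot> Fa (Ga f) = Fa (Ga (Fa (Ga f))) \<cdot> smash_comult (src C f)"
proof -
  have "smash_comult (trg C f) \<cdot> Fa (Ga f) =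
        Fa (phi (Go (trg C f))) \<cdot> Fa (Fa (dG (trg C f))) \<cdot> Fa (Fa (Ga f)) \<cdot> DF (Go (src C f))"
    using f by (simp add: DF_nat)
  also have "\<dots> = Fa (phi (Go (trg C f))) \<cdot> Fa (Fa (Ga (Ga f))) \<cdot> Fa (Fa (dG (src C f))) \<cdot> DF (Go (src C f))"
    using f by (simp add: comp_eq_extend2[OF F_map_comp_eq[OF F_map_comp_eq[OF dG_nat]]])
  also have "\<dots> = Fa (Ga (Fa (Ga f))) \<cdot> smash_comult (src C f)"
    using f by (simp add: comp_eq_extend2[OF F_map_comp_eq[OF phi_nat]])
  finally show ?thesis .
qed

lemma smash_counit_nat:
  "f \<in> ar C \<Longrightarrow> smash_counit (trg C f) \<cdot> Fa (Ga f) = f \<cdot> smash_counit (src C f)"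
  by (simp add: eF_nat comp_eq_extend2[OF eG_nat])

lemma smash_counit_inner:
  assumes X: "X \<in> ob C"
  shows "Fa (Ga (smash_counit X)) \<cdot> smash_comult X = idm C (Fo (Go X))"
proof -
  have "Fa (Ga (smash_counit X)) \<cdot> smash_comult X
     = Fa (Ga (eG X)) \<cdot> Fa (eF (Go (Go X))) \<cdot> Fa (Fa (dG X)) \<cdot> DF (Go X)"
    using X by (simp add: comp_eq_extend2[OF F_map_comp_eq[OF phi_counit_F]])
  also have "\<dots> = Fa (Ga (eG X)) \<cdot> Fa (dG X) \<cdot> Fa (eF (Go X)) \<cdot> DF (Go X)"
    using X by (simp add: comp_eq_extend2[OF F_map_comp_eq[OF eF_nat]])
  also have "\<dots> = idm C (Fo (Go X))"
    using X by (simp add: comonad_counit_inner[OF F_comonad]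
        F_map_comp_eq[OF comonad_counit_inner[OF G_comonad]])
  finally show ?thesis .
qed

lemma smash_counit_outer:
  assumes X: "X \<in> ob C"
  shows "smash_counit (Fo (Go X)) \<cdot> smash_comult X = idm C (Fo (Go X))"
proof -
  have "smash_counit (Fo (Go X)) \<cdot> smash_comult X
     = eG (Fo (Go X)) \<cdot> phi (Go X) \<cdot> Fa (dG X) \<cdot> eF (Fo (Go X)) \<cdot> DF (Go X)"
    using X by (simp add: comp_eq_extend2[OF eF_nat])
  also have "\<dots> = idm C (Fo (Go X))"
    using X by (simp add: comonad_counit_outer[OF F_comonad] comp_eq_extend2[OF phi_counit_G]
        F_map_comp_eq[OF comonad_counit_outer[OF G_comonad]])
  finally show ?thesis .
qed

lemma smash_coassoc:
  assumes X: "X \<in> ob C"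
  shows "Fa (Ga (smash_comult X)) \<cdot> smash_comult X = smash_comult (Fo (Go X)) \<cdot> smash_comult X"
proof -
  let ?g = "Go X" and ?gg = "Go (Go X)" and ?ggg = "Go (Go (Go X))" and ?y = "Fo (Go X)"
  let ?common = "Fa (Fa (phi ?gg)) \<cdot> DF (Fo ?ggg) \<cdot> DF ?ggg \<cdot> Fa (dG ?g) \<cdot> Fa (dG X)"
  have "Fa (Ga (smash_comult X)) \<cdot> smash_comult X
    = Fa (Ga (Fa (phi ?g))) \<cdot> Fa (Ga (DF ?gg)) \<cdot> Fa (phi ?gg) \<cdot> Fa (Fa (Ga (dG X))) \<cdot> DF ?gg \<cdot> Fa (dG X)"
    using X by (simp add: smash_comult_alt F_map_comp_eq[OF phi_nat']
        comp_eq_extend2[OF F_map_comp_eq[OF phi_nat']])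
  also have "\<dots> = Fa (Ga (Fa (phi ?g))) \<cdot> Fa (phi (Fo ?gg)) \<cdot> Fa (Fa (phi ?gg)) \<cdot> Fa (DF ?ggg)
      \<cdot> Fa (Fa (Ga (dG X))) \<cdot> DF ?gg \<cdot> Fa (dG X)"
    using X by (simp add: comp_eq_extend2[OF F_map_comp_eq[OF phi_comult_F[symmetric]]])
  also have "\<dots> = Fa (Ga (Fa (phi ?g))) \<cdot> Fa (phi (Fo ?gg)) \<cdot> Fa (Fa (phi ?gg)) \<cdot> Fa (Fa (Fa (Ga (dG X))))
      \<cdot> DF (Fo ?gg) \<cdot> DF ?gg \<cdot> Fa (dG X)"
    using X by (simp add: comp_eq_extend2[OF F_map_comp_eq[OF DF_nat]]
        comp_eq_extend2[OF comonad_coassoc[OF F_comonad]])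
  also have "\<dots> = Fa (Ga (Fa (phi ?g))) \<cdot> Fa (phi (Fo ?gg)) \<cdot> ?common"
    using X by (simp add: comp_eq_extend2[OF DF_nat']
        comp_eq_extend2[OF F_map_comp_eq[OF comonad_coassoc[OF G_comonad]]]
        F_map_comp_eq[OF comonad_coassoc[OF G_comonad]])
  finally have lhs: "Fa (Ga (smash_comult X)) \<cdot> smash_comult X
      = Fa (Ga (Fa (phi ?g))) \<cdot> Fa (phi (Fo ?gg)) \<cdot> ?common" .
  have "smash_comult ?y \<cdot> smash_comult X
     = Fa (phi (Go ?y)) \<cdot> DF (Go (Go ?y)) \<cdot> Fa (Ga (phi ?g)) \<cdot> Fa (phi ?gg) \<cdot> Fa (Fa (dG ?g))
       \<cdot> DF ?gg \<cdot> Fa (dG X)"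
    using X by (simp add: smash_comult_alt
        comp_eq_extend2[OF F_map_comp_eq[OF phi_comult_G[symmetric]]])
  also have "\<dots> = Fa (phi (Go ?y)) \<cdot> Fa (Fa (Ga (phi ?g))) \<cdot> DF (Go (Fo ?gg)) \<cdot> Fa (phi ?gg)
      \<cdot> Fa (Fa (dG ?g)) \<cdot> DF ?gg \<cdot> Fa (dG X)"
    using X by (simp add: comp_eq_extend2[OF DF_nat])
  also have "\<dots> = Fa (phi (Go ?y)) \<cdot> Fa (Fa (Ga (phi ?g))) \<cdot> Fa (Fa (phi ?gg)) \<cdot> DF (Fo ?ggg)
      \<cdot> Fa (Fa (dG ?g)) \<cdot> DF ?gg \<cdot> Fa (dG X)"
    using X by (simp add: comp_eq_extend2[OF DF_nat])
  also have "\<dots> = Fa (phi (Go ?y)) \<cdot> Fa (Fa (Ga (phi ?g))) \<cdot> ?common"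
    using X by (simp add: comp_eq_extend2[OF DF_nat'])
  also have "\<dots> = Fa (Ga (Fa (phi ?g))) \<cdot> Fa (phi (Fo ?gg)) \<cdot> ?common"
    using X by (simp add: comp_eq_extend2[OF F_map_comp_eq[OF phi_nat]])
  finally show ?thesis using lhs by simp
qed

theorem smash_coproduct_comonad:
  "comonad C (Fo \<circ> Go) (Fa \<circ> Ga) smash_comult smash_counit"
  unfolding comonad_def nat_trans_def hom_def
  by (intro conjI ballI composite_endofunctor)
    (simp_all only: o_apply id_apply smash_comult_nat smash_counit_nat smash_coassoc
      smash_counit_inner smash_counit_outer, simp_all)

abbreviation strip_counits :: "'o \<Rightarrow> 'a"
  where "strip_counits X \<equiv> Ga (Fa (eG X)) \<cdot> eF (Go (Fo (Go X)))"

lemma strip_counits_smash_comult: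
  assumes X: "X \<in> ob C"
  shows "strip_counits X \<cdot> smash_comult X = phi X"
proof -
  have "strip_counits X \<cdot> smash_comult X
     = Ga (Fa (eG X)) \<cdot> phi (Go X) \<cdot> Fa (dG X) \<cdot> eF (Fo (Go X)) \<cdot> DF (Go X)"
    using X by (simp add: comp_eq_extend2[OF eF_nat])
  also have "\<dots> = phi X \<cdot> Fa (Ga (eG X)) \<cdot> Fa (dG X)"
    using X by (simp add: comonad_counit_outer[OF F_comonad] comp_eq_extend2[OF phi_nat'])
  also have "\<dots> = phi X"
    using X by (simp add: F_map_comp_eq[OF comonad_counit_inner[OF G_comonad]])
  finally show ?thesis .
qed

end

section \<open>Composites of monoidal functors\<close>

locale composable_monoidal_functors = concrete_monoidal_category C
  for C :: "('o, 'a, 'm) moncat_scheme" +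
  fixes Fo :: "'o \<Rightarrow> 'o" and Fa :: "'a \<Rightarrow> 'a" and F2 :: "'o \<Rightarrow> 'o \<Rightarrow> 'a" and F0 :: 'a
    and Go :: "'o \<Rightarrow> 'o" and Ga :: "'a \<Rightarrow> 'a" and G2 :: "'o \<Rightarrow> 'o \<Rightarrow> 'a" and G0 :: 'a
  assumes F_monoidal: "monoidal_functor C Fo Fa F2 F0"
    and G_monoidal: "monoidal_functor C Go Ga G2 G0"

sublocale composable_monoidal_functors \<subseteq> endofunctor_pair C Fo Fa Go Ga
  by unfold_locales (rule monoidal_functor_endofunctor, fact F_monoidal G_monoidal)+

context composable_monoidal_functors
begin

abbreviation FG2 :: "'o \<Rightarrow> 'o \<Rightarrow> 'a"
  where "FG2 M N \<equiv> Fa (G2 M N) \<cdot> F2 (Go M) (Go N)"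

abbreviation FG0 :: 'a
  where "FG0 \<equiv> Fa G0 \<cdot> F0"

lemmas [simp] =
  monoidal_functor_tensor_arr[OF F_monoidal] monoidal_functor_tensor_src[OF F_monoidal]
  monoidal_functor_tensor_trg[OF F_monoidal] monoidal_functor_unit_arr[OF F_monoidal]
  monoidal_functor_unit_src[OF F_monoidal] monoidal_functor_unit_trg[OF F_monoidal]
  monoidal_functor_tensor_arr[OF G_monoidal] monoidal_functor_tensor_src[OF G_monoidal]
  monoidal_functor_tensor_trg[OF G_monoidal] monoidal_functor_unit_arr[OF G_monoidal]
  monoidal_functor_unit_src[OF G_monoidal] monoidal_functor_unit_trg[OF G_monoidal]

lemmas F2_nat = monoidal_functor_tensor_nat[OF F_monoidal]
lemmas G2_nat = monoidal_functor_tensor_nat[OF G_monoidal]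

lemma F2_nat': "f \<in> ar C \<Longrightarrow> g \<in> ar C \<Longrightarrow> src C f = A \<Longrightarrow> src C g = B \<Longrightarrow>
    Fa (f \<otimes> g) \<cdot> F2 A B = F2 (trg C f) (trg C g) \<cdot> (Fa f \<otimes> Fa g)"
  using F2_nat by metis

lemma G2_nat': "f \<in> ar C \<Longrightarrow> g \<in> ar C \<Longrightarrow> src C f = A \<Longrightarrow> src C g = B \<Longrightarrow>
    Ga (f \<otimes> g) \<cdot> G2 A B = G2 (trg C f) (trg C g) \<cdot> (Ga f \<otimes> Ga g)"
  using G2_nat by metis

lemma F2_nat_left: "f \<in> ar C \<Longrightarrow> trg C f = A \<Longrightarrow> B \<in> ob C \<Longrightarrow>
    F2 A B \<cdot> (Fa f \<otimes> idm C (Fo B)) = Fa (f \<otimes> idm C B) \<cdot> F2 (src C f) B"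
  using F2_nat[of f "idm C B" A B] by simp

lemma F2_nat_right: "g \<in> ar C \<Longrightarrow> trg C g = B \<Longrightarrow> A \<in> ob C \<Longrightarrow>
    F2 A B \<cdot> (idm C (Fo A) \<otimes> Fa g) = Fa (idm C A \<otimes> g) \<cdot> F2 A (src C g)"
  using F2_nat[of "idm C A" g A B] by simp

lemma F2_nat_right': "g \<in> ar C \<Longrightarrow> src C g = B \<Longrightarrow> A \<in> ob C \<Longrightarrow>
    Fa (idm C A \<otimes> g) \<cdot> F2 A B = F2 A (trg C g) \<cdot> (idm C (Fo A) \<otimes> Fa g)"
  using F2_nat[of "idm C A" g A "trg C g"] by simp

lemma FG2_nat:
  "f \<in> ar C \<Longrightarrow> g \<in> ar C \<Longrightarrow>
    FG2 (trg C f) (trg C g) \<cdot> (Fa (Ga f) \<otimes> Fa (Ga g)) = Fa (Ga (f \<otimes> g)) \<cdot> FG2 (src C f) (src C g)"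
  by (simp add: F2_nat comp_eq_extend2[OF F_map_comp_eq[OF G2_nat]])

lemma FG_assoc:
  assumes X: "X \<in> ob C" and Y: "Y \<in> ob C" and Z: "Z \<in> ob C"
  shows "Fa (Ga (asc C X Y Z)) \<cdot> FG2 (tno C X Y) Z \<cdot> (FG2 X Y \<otimes> idm C (Fo (Go Z)))
    = FG2 X (tno C Y Z) \<cdot> (idm C (Fo (Go X)) \<otimes> FG2 Y Z) \<cdot> asc C (Fo (Go X)) (Fo (Go Y)) (Fo (Go Z))"
proof -
  have "Fa (Ga (asc C X Y Z)) \<cdot> FG2 (tno C X Y) Z \<cdot> (FG2 X Y \<otimes> idm C (Fo (Go Z)))
     = Fa (Ga (asc C X Y Z)) \<cdot> Fa (G2 (tno C X Y) Z) \<cdot> Fa (G2 X Y \<otimes> idm C (Go Z))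
       \<cdot> F2 (tno C (Go X) (Go Y)) (Go Z) \<cdot> (F2 (Go X) (Go Y) \<otimes> idm C (Fo (Go Z)))"
    using X Y Z by (simp add: comp_eq_extend2[OF F2_nat_left])
  also have "\<dots> = Fa (G2 X (tno C Y Z)) \<cdot> Fa (idm C (Go X) \<otimes> G2 Y Z) \<cdot> Fa (asc C (Go X) (Go Y) (Go Z))
       \<cdot> F2 (tno C (Go X) (Go Y)) (Go Z) \<cdot> (F2 (Go X) (Go Y) \<otimes> idm C (Fo (Go Z)))"
    using X Y Z
    by (simp add: comp_eq_extend3[OF F_map_comp_eq3[OF monoidal_functor_assoc[OF G_monoidal]]])
  also have "\<dots> = Fa (G2 X (tno C Y Z)) \<cdot> Fa (idm C (Go X) \<otimes> G2 Y Z) \<cdot> F2 (Go X) (tno C (Go Y) (Go Z))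
       \<cdot> (idm C (Fo (Go X)) \<otimes> F2 (Go Y) (Go Z)) \<cdot> asc C (Fo (Go X)) (Fo (Go Y)) (Fo (Go Z))"
    using X Y Z by (simp add: monoidal_functor_assoc[OF F_monoidal])
  also have "\<dots> = FG2 X (tno C Y Z) \<cdot> (idm C (Fo (Go X)) \<otimes> FG2 Y Z) \<cdot> asc C (Fo (Go X)) (Fo (Go Y)) (Fo (Go Z))"
    using X Y Z by (simp add: comp_eq_extend2[OF F2_nat_right'])
  finally show ?thesis .
qed

lemma FG_left_unit:
  assumes X: "X \<in> ob C"
  shows "Fa (Ga (lu C X)) \<cdot> FG2 (unt C) X \<cdot> (FG0 \<otimes> idm C (Fo (Go X))) = lu C (Fo (Go X))"
proof -
  have "Fa (Ga (lu C X)) \<cdot> FG2 (unt C) X \<cdot> (FG0 \<otimes> idm C (Fo (Go X)))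
     = Fa (Ga (lu C X)) \<cdot> Fa (G2 (unt C) X) \<cdot> Fa (G0 \<otimes> idm C (Go X)) \<cdot> F2 (unt C) (Go X)
       \<cdot> (F0 \<otimes> idm C (Fo (Go X)))"
    using X by (simp add: comp_eq_extend2[OF F2_nat_left])
  also have "\<dots> = Fa (lu C (Go X)) \<cdot> F2 (unt C) (Go X) \<cdot> (F0 \<otimes> idm C (Fo (Go X)))"
    using X
    by (simp add: comp_eq_extend3[OF F_map_comp_eq3[OF monoidal_functor_left_unit[OF G_monoidal]]])
  also have "\<dots> = lu C (Fo (Go X))"
    using X by (simp add: monoidal_functor_left_unit[OF F_monoidal])
  finally show ?thesis .
qed

lemma FG_right_unit:
  assumes X: "X \<in> ob C"
  shows "Fa (Ga (ru C X)) \<cdot> FG2 X (unt C) \<cdot> (idm C (Fo (Go X)) \<otimes> FG0) = ru C (Fo (Go X))"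
proof -
  have "Fa (Ga (ru C X)) \<cdot> FG2 X (unt C) \<cdot> (idm C (Fo (Go X)) \<otimes> FG0)
     = Fa (Ga (ru C X)) \<cdot> Fa (G2 X (unt C)) \<cdot> Fa (idm C (Go X) \<otimes> G0) \<cdot> F2 (Go X) (unt C)
       \<cdot> (idm C (Fo (Go X)) \<otimes> F0)"
    using X by (simp add: comp_eq_extend2[OF F2_nat_right])
  also have "\<dots> = Fa (ru C (Go X)) \<cdot> F2 (Go X) (unt C) \<cdot> (idm C (Fo (Go X)) \<otimes> F0)"
    using X
    by (simp add: comp_eq_extend3[OF F_map_comp_eq3[OF monoidal_functor_right_unit[OF G_monoidal]]])
  also have "\<dots> = ru C (Fo (Go X))"
    using X by (simp add: monoidal_functor_right_unit[OF F_monoidal])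
  finally show ?thesis .
qed

theorem composite_monoidal_functor: "monoidal_functor C (Fo \<circ> Go) (Fa \<circ> Ga) FG2 FG0"
  unfolding monoidal_functor_def hom_def
  by (intro conjI ballI composite_endofunctor)
    (simp_all only: o_apply FG2_nat FG_assoc FG_left_unit FG_right_unit, simp_all)

end

section \<open>Smash coproducts of bicomonads\<close>

locale bicomonad_distributive_law = concrete_monoidal_category C
  for C :: "('o, 'a, 'm) moncat_scheme" +
  fixes Fo :: "'o \<Rightarrow> 'o" and Fa :: "'a \<Rightarrow> 'a" and DF eF :: "'o \<Rightarrow> 'a"
    and F2 :: "'o \<Rightarrow> 'o \<Rightarrow> 'a" and F0 :: 'a
    and Go :: "'o \<Rightarrow> 'o" and Ga :: "'a \<Rightarrow> 'a" and dG eG :: "'o \<Rightarrow> 'a"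
    and G2 :: "'o \<Rightarrow> 'o \<Rightarrow> 'a" and G0 :: 'a
    and phi :: "'o \<Rightarrow> 'a"
  assumes F_bicomonad: "bicomonad C Fo Fa DF eF F2 F0"
    and G_bicomonad: "bicomonad C Go Ga dG eG G2 G0"
    and comonad_distributive: "comonad_distributive_law C Fo Fa DF eF Go Ga dG eG phi"

sublocale bicomonad_distributive_law \<subseteq> distributive_comonads C Fo Fa DF eF Go Ga dG eG phi
  by unfold_locales
    (rule bicomonad_comonad, fact F_bicomonad G_bicomonad | fact comonad_distributive)+

sublocale bicomonad_distributive_law \<subseteq> composable_monoidal_functors C Fo Fa F2 F0 Go Ga G2 G0
  by unfold_locales (rule bicomonad_monoidal_functor, fact F_bicomonad G_bicomonad)+

context bicomonad_distributive_law
begin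

abbreviation phi_tensor_compat :: "'o \<Rightarrow> 'o \<Rightarrow> bool"
  where "phi_tensor_compat M N \<equiv>
    phi (tno C M N) \<cdot> FG2 M N = Ga (F2 M N) \<cdot> G2 (Fo M) (Fo N) \<cdot> (phi M \<otimes> phi N)"

abbreviation phi_unit_compat :: bool
  where "phi_unit_compat \<equiv> phi (unt C) \<cdot> FG0 = Ga F0 \<cdot> G0"

abbreviation smash_comult_tensor_compat :: "'o \<Rightarrow> 'o \<Rightarrow> bool"
  where "smash_comult_tensor_compat X Y \<equiv>
    Fa (Ga (FG2 X Y)) \<cdot> FG2 (Fo (Go X)) (Fo (Go Y)) \<cdot> (smash_comult X \<otimes> smash_comult Y) =
    smash_comult (tno C X Y) \<cdot> FG2 X Y"

abbreviation smash_comult_unit_compat :: bool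
  where "smash_comult_unit_compat \<equiv> Fa (Ga FG0) \<cdot> FG0 = smash_comult (unt C) \<cdot> FG0"

lemmas F_comult_tensor = bicomonad_comult_tensor[OF F_bicomonad]
  and F_counit_tensor = bicomonad_counit_tensor[OF F_bicomonad]
  and F_comult_unit = bicomonad_comult_unit[OF F_bicomonad]
  and F_counit_unit = bicomonad_counit_unit[OF F_bicomonad]
  and G_comult_tensor = bicomonad_comult_tensor[OF G_bicomonad]
  and G_counit_tensor = bicomonad_counit_tensor[OF G_bicomonad]
  and G_comult_unit = bicomonad_comult_unit[OF G_bicomonad]
  and G_counit_unit = bicomonad_counit_unit[OF G_bicomonad]

lemma smash_counit_tensor:
  assumes X: "X \<in> ob C" and Y: "Y \<in> ob C"
  shows "smash_counit (tno C X Y) \<cdot> FG2 X Y = smash_counit X \<otimes> smash_counit Y"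
proof -
  have "smash_counit (tno C X Y) \<cdot> FG2 X Y
      = eG (tno C X Y) \<cdot> G2 X Y \<cdot> eF (tno C (Go X) (Go Y)) \<cdot> F2 (Go X) (Go Y)"
    using X Y by (simp add: comp_eq_extend2[OF eF_nat])
  also have "\<dots> = (eG X \<otimes> eG Y) \<cdot> (eF (Go X) \<otimes> eF (Go Y))"
    using X Y by (simp add: comp_eq_extend2[OF G_counit_tensor] F_counit_tensor)
  also have "\<dots> = smash_counit X \<otimes> smash_counit Y"
    using X Y by (simp add: interchange)
  finally show ?thesis .
qed

lemma smash_counit_unit: "smash_counit (unt C) \<cdot> FG0 = idm C (unt C)"
proof -
  have "smash_counit (unt C) \<cdot> FG0 = eG (unt C) \<cdot> G0 \<cdot> eF (unt C) \<cdot> F0"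
    by (simp add: comp_eq_extend2[OF eF_nat])
  also have "\<dots> = idm C (unt C)"
    by (simp add: F_counit_unit G_counit_unit)
  finally show ?thesis .
qed

lemma smash_comult_unit_compat_if_phi_unit_compat:
  assumes phi_unit: phi_unit_compat
  shows smash_comult_unit_compat
proof -
  have "smash_comult (unt C) \<cdot> FG0
      = Fa (phi (Go (unt C))) \<cdot> Fa (Fa (dG (unt C))) \<cdot> Fa (Fa G0) \<cdot> Fa F0 \<cdot> F0"
    by (simp add: comp_eq_extend2[OF DF_nat] F_comult_unit[symmetric])
  also have "\<dots> = Fa (phi (Go (unt C))) \<cdot> Fa (Fa (Ga G0)) \<cdot> Fa (Fa G0) \<cdot> Fa F0 \<cdot> F0"
    by (simp add: comp_eq_extend2[OF F_map_comp_eq[OF F_map_comp_eq[OF G_comult_unit[symmetric]]]])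
  also have "\<dots> = Fa (Ga (Fa G0)) \<cdot> Fa (phi (unt C)) \<cdot> Fa (Fa G0) \<cdot> Fa F0 \<cdot> F0"
    by (simp add: comp_eq_extend2[OF F_map_comp_eq[OF phi_nat]])
  also have "\<dots> = Fa (Ga FG0) \<cdot> FG0"
    by (simp add: comp_eq_extend3[OF F_map_comp_eq3[OF phi_unit]])
  finally show ?thesis by simp
qed

lemma smash_comult_tensor_compat_if_phi_tensor_compat:
  assumes X: "X \<in> ob C" and Y: "Y \<in> ob C"
    and phi_tensor: "phi_tensor_compat (Go X) (Go Y)"
  shows "smash_comult_tensor_compat X Y"
proof -
  let ?gx = "Go X" and ?gy = "Go Y"
  have "smash_comult (tno C X Y) \<cdot> FG2 X Y
     = Fa (phi (Go (tno C X Y))) \<cdot> Fa (Fa (dG (tno C X Y))) \<cdot> Fa (Fa (G2 X Y)) \<cdot> Fa (F2 ?gx ?gy)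
       \<cdot> F2 (Fo ?gx) (Fo ?gy) \<cdot> (DF ?gx \<otimes> DF ?gy)"
    using X Y by (simp add: comp_eq_extend2[OF DF_nat] F_comult_tensor[symmetric])
  also have "\<dots> = Fa (phi (Go (tno C X Y))) \<cdot> Fa (Fa (Ga (G2 X Y))) \<cdot> Fa (Fa (G2 ?gx ?gy))
       \<cdot> Fa (Fa (dG X \<otimes> dG Y)) \<cdot> Fa (F2 ?gx ?gy) \<cdot> F2 (Fo ?gx) (Fo ?gy) \<cdot> (DF ?gx \<otimes> DF ?gy)"
    using X Y
    by (simp add: comp_eq_extend2[OF F_map_comp_eq[OF F_map_comp_eq[OF G_comult_tensor[symmetric]]]])
  also have "\<dots> = Fa (phi (Go (tno C X Y))) \<cdot> Fa (Fa (Ga (G2 X Y))) \<cdot> Fa (Fa (G2 ?gx ?gy))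
       \<cdot> Fa (F2 (Go ?gx) (Go ?gy)) \<cdot> F2 (Fo (Go ?gx)) (Fo (Go ?gy))
       \<cdot> (Fa (Fa (dG X)) \<otimes> Fa (Fa (dG Y))) \<cdot> (DF ?gx \<otimes> DF ?gy)"
    using X Y by (simp add: comp_eq_extend2[OF F_map_comp_eq[OF F2_nat']] comp_eq_extend2[OF F2_nat'])
  also have "\<dots> = Fa (Ga (Fa (G2 X Y))) \<cdot> Fa (phi (tno C ?gx ?gy)) \<cdot> Fa (Fa (G2 ?gx ?gy))
       \<cdot> Fa (F2 (Go ?gx) (Go ?gy)) \<cdot> F2 (Fo (Go ?gx)) (Fo (Go ?gy))
       \<cdot> (Fa (Fa (dG X)) \<otimes> Fa (Fa (dG Y))) \<cdot> (DF ?gx \<otimes> DF ?gy)"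
    using X Y by (simp add: comp_eq_extend2[OF F_map_comp_eq[OF phi_nat]])
  also have "\<dots> = Fa (Ga (Fa (G2 X Y))) \<cdot> Fa (Ga (F2 ?gx ?gy)) \<cdot> Fa (G2 (Fo ?gx) (Fo ?gy))
       \<cdot> Fa (phi ?gx \<otimes> phi ?gy) \<cdot> F2 (Fo (Go ?gx)) (Fo (Go ?gy))
       \<cdot> (Fa (Fa (dG X)) \<otimes> Fa (Fa (dG Y))) \<cdot> (DF ?gx \<otimes> DF ?gy)"
    using X Y by (simp add: comp_eq_extend3[OF F_map_comp_eq3[OF phi_tensor]])
  also have "\<dots> = Fa (Ga (FG2 X Y)) \<cdot> FG2 (Fo (Go X)) (Fo (Go Y)) \<cdot> (smash_comult X \<otimes> smash_comult Y)"
    using X Y by (simp add: comp_eq_extend2[OF F2_nat'] interchange)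
  finally show ?thesis by simp
qed

lemma phi_tensor_compat_if_smash_comult_tensor_compat:
  assumes X: "X \<in> ob C" and Y: "Y \<in> ob C"
    and smash_tensor: "smash_comult_tensor_compat X Y"
  shows "phi_tensor_compat X Y"
proof -
  let ?gx = "Go X" and ?gy = "Go Y" and ?XY = "tno C X Y"
  have "phi ?XY \<cdot> FG2 X Y = (strip_counits ?XY \<cdot> smash_comult ?XY) \<cdot> FG2 X Y"
    using X Y by (simp only: strip_counits_smash_comult tensor_ob)
  also have "\<dots> = strip_counits ?XY \<cdot> smash_comult ?XY \<cdot> FG2 X Y"
    using X Y by simp
  also have "\<dots> = strip_counits ?XY \<cdot> Fa (Ga (FG2 X Y)) \<cdot> FG2 (Fo ?gx) (Fo ?gy)
      \<cdot> (smash_comult X \<otimes> smash_comult Y)"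
    by (simp only: smash_tensor)
  also have "\<dots> = Ga (Fa (eG ?XY)) \<cdot> Ga (Fa (G2 X Y)) \<cdot> Ga (F2 ?gx ?gy) \<cdot> G2 (Fo ?gx) (Fo ?gy)
      \<cdot> (eF (Go (Fo ?gx)) \<otimes> eF (Go (Fo ?gy))) \<cdot> (smash_comult X \<otimes> smash_comult Y)"
    using X Y by (simp add: comp_eq_extend2[OF eF_nat] comp_eq_extend2[OF F_counit_tensor])
  also have "\<dots> = Ga (F2 X Y) \<cdot> G2 (Fo X) (Fo Y) \<cdot> (Ga (Fa (eG X)) \<otimes> Ga (Fa (eG Y)))
      \<cdot> (eF (Go (Fo ?gx)) \<otimes> eF (Go (Fo ?gy))) \<cdot> (smash_comult X \<otimes> smash_comult Y)"
    using X Y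
    by (simp add: comp_eq_extend2[OF G_map_comp_eq[OF F_map_comp_eq[OF G_counit_tensor]]]
        comp_eq_extend2[OF G_map_comp_eq[OF F2_nat']] comp_eq_extend2[OF G2_nat'])
  also have "\<dots> = Ga (F2 X Y) \<cdot> G2 (Fo X) (Fo Y)
      \<cdot> ((strip_counits X \<cdot> smash_comult X) \<otimes> (strip_counits Y \<cdot> smash_comult Y))"
    using X Y by (simp add: interchange)
  also have "\<dots> = Ga (F2 X Y) \<cdot> G2 (Fo X) (Fo Y) \<cdot> (phi X \<otimes> phi Y)"
    using X Y by (simp only: strip_counits_smash_comult)
  finally show ?thesis .
qed

lemma phi_unit_compat_if_smash_comult_unit_compat:
  assumes smash_unit: smash_comult_unit_compat
  shows phi_unit_compat
proof -
  have "phi (unt C) \<cdot> FG0 = (strip_counits (unt C) \<cdot> smash_comult (unt C)) \<cdot> FG0"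
    by (simp only: strip_counits_smash_comult unit_ob)
  also have "\<dots> = strip_counits (unt C) \<cdot> smash_comult (unt C) \<cdot> FG0"
    by simp
  also have "\<dots> = strip_counits (unt C) \<cdot> Fa (Ga FG0) \<cdot> FG0"
    by (simp only: smash_unit)
  also have "\<dots> = Ga (Fa (eG (unt C))) \<cdot> Ga (Fa G0) \<cdot> Ga F0 \<cdot> G0"
    by (simp add: comp_eq_extend2[OF eF_nat] F_counit_unit)
  also have "\<dots> = Ga F0 \<cdot> G0"
    by (simp add: comp_eq_extend2[OF G_map_comp_eq[OF F_map_comp_eq[OF G_counit_unit]]])
  finally show ?thesis .
qed

lemma smash_bicomonad_iff:
  "bicomonad C (Fo \<circ> Go) (Fa \<circ> Ga) smash_comult smash_counit FG2 FG0 \<longleftrightarrow>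
    (\<forall>X\<in>ob C. \<forall>Y\<in>ob C. smash_comult_tensor_compat X Y) \<and> smash_comult_unit_compat"
  using smash_coproduct_comonad composite_monoidal_functor smash_counit_tensor smash_counit_unit
  unfolding bicomonad_def by (simp only: o_apply) blast

end

theorem lemma3p4:
  fixes C :: "('o, 'a, 'm) moncat_scheme"
  assumes "monoidal_category C"
    and "bicomonad C Fo Fa DF eF F2 F0"
    and "bicomonad C Go Ga dG eG G2 G0"
    and "comonad_distributive_law C Fo Fa DF eF Go Ga dG eG phi"
  shows "monoidal_distributive_law C Fo Fa F2 F0 Go Ga G2 G0 phi \<longleftrightarrow>
         bicomonad C (Fo \<circ> Go) (Fa \<circ> Ga)
           (\<lambda>X. cmp C (Fa (phi (Go X))) (cmp C (Fa (Fa (dG X))) (DF (Go X))))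
           (\<lambda>X. cmp C (eG X) (eF (Go X)))
           (\<lambda>M N. cmp C (Fa (G2 M N)) (F2 (Go M) (Go N)))
           (cmp C (Fa G0) F0)"
proof -
  interpret bicomonad_distributive_law C Fo Fa DF eF F2 F0 Go Ga dG eG G2 G0 phi
    using assms by unfold_locales (auto simp: monoidal_category_def)
  have tensor: "(\<forall>M\<in>ob C. \<forall>N\<in>ob C. phi_tensor_compat M N) \<longleftrightarrow>
      (\<forall>X\<in>ob C. \<forall>Y\<in>ob C. smash_comult_tensor_compat X Y)"
    using smash_comult_tensor_compat_if_phi_tensor_compat
      phi_tensor_compat_if_smash_comult_tensor_compat endofunctor_ob[OF G_endofunctor]
    by blast
  have unit: "phi_unit_compat \<longleftrightarrow> smash_comult_unit_compat"
    using smash_comult_unit_compat_if_phi_unit_compat phi_unit_compat_if_smash_comult_unit_compat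
    by blast
  show ?thesis
    unfolding monoidal_distributive_law_def smash_bicomonad_iff using tensor unit by blast
qed

end
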